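(* Let $r\ge 2$, $t\ge 1$, and let $\mathcal F\subset 2^{[n]}$ be a non-trivial $r$-wise $t$-agreeing family. For $j\in[n]$ let $\mathcal F_j=\{F\setminus\{j\}: F\in\mathcal F\}$, regarded as a subfamily of $2^{[n]\setminus\{j\}}$ (with ground set $[n]\setminus\{j\}$). If $t\ge 2$ then $\mathcal F_j$ is non-trivial $r$-wise $(t-1)$-agreeing. If $t=1$ then $\mathcal F_j$ is non-trivial $(r-1)$-wise agreeing (i.e. $(r-1)$-wise $1$-agreeing).
   Context: For a ground set $X$ and a family $\mathcal F\subset 2^X$: sets $F_1,\ldots,F_r\subset X$ agree on a coordinate $x\in X$ if either $x\in\bigcap_{i}F_i$ or $x\notin\bigcup_i F_i$. $\mathcal F$ is $r$-wise $t$-agreeing if any $r$ sets from $\mathcal F$ (not necessarily distinct) agree on at least $t$ coordinates of $X$; $r$-wise agreeing means $r$-wise $1$-agreeing. $\mathcal F$ is non-trivial if $\bigcap_{A\in\mathcal F}A=\emptyset$ and $\bigcup_{A\in\mathcal F}A=X$. Here $X=[n]$ for $\mathcal F$ and $X=[n]\setminus\{j\}$ for $\mathcal F_j$. *)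

theory Defs
  imports Main
begin

definition agree_on :: "nat \<Rightarrow> (nat \<Rightarrow> 'a set) \<Rightarrow> 'a \<Rightarrow> bool" where
  "agree_on r G x \<longleftrightarrow> (\<forall>i<r. x \<in> G i) \<or> (\<forall>i<r. x \<notin> G i)"

text \<open>r-wise t-agreeing over ground set X: any r (not necessarily distinct)
  members of F agree on at least t coordinates of X.\<close>
definition r_wise_t_agreeing :: "'a set \<Rightarrow> 'a set set \<Rightarrow> nat \<Rightarrow> nat \<Rightarrow> bool" where
  "r_wise_t_agreeing X F r t \<longleftrightarrow>
     (\<forall>G. (\<forall>i<r. G i \<in> F) \<longrightarrow> t \<le> card {x \<in> X. agree_on r G x})"

definition non_trivial :: "'a set \<Rightarrow> 'a set set \<Rightarrow> bool" where
  "non_trivial X F \<longleftrightarrow> \<Inter> F = {} \<and> \<Union> F = X"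

end

theory Submission
  imports Defs
begin

text \<open>Deleting the coordinate \<open>j\<close> destroys at most one agreement coordinate, which gives
  the \<open>r\<close>-wise \<open>(t - 1)\<close>-agreement of \<open>F\<^sub>j\<close>. For \<open>t = 1\<close>, lift \<open>r - 1\<close> members of \<open>F\<^sub>j\<close>
  to \<open>F\<close> and complete them once by a member of \<open>F\<close> avoiding \<open>j\<close> and once by a member
  containing \<open>j\<close> (both exist by non-triviality): the two \<open>r\<close>-tuples cannot both agree
  at \<open>j\<close>, so one of them agrees at a coordinate other than \<open>j\<close>.\<close>

lemma obtain_preimage_tuple:
  assumes "\<forall>i<r. G i \<in> f ` F"
  obtains H where "\<forall>i<r. H i \<in> F \<and> G i = f (H i)"
proof -
  have "\<forall>i. \<exists>A. i < r \<longrightarrow> A \<in> F \<and> G i = f A"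
    using assms by blast
  then show ?thesis
    using that by metis
qed

lemma agree_on_Diff_singleton:
  assumes "\<forall>i<r. G i = H i - {j}" and "x \<noteq> j"
  shows "agree_on r G x \<longleftrightarrow> agree_on r H x"
  using assms unfolding agree_on_def by auto

lemma agree_on_fun_upd_SucD:
  "agree_on (Suc m) (H(m := C)) x \<Longrightarrow> agree_on m H x"
  unfolding agree_on_def by (metis fun_upd_other less_SucI less_irrefl)

lemma not_agree_on_fun_upd_Suc:
  assumes "0 < m" and "x \<in> H 0 \<longleftrightarrow> x \<notin> C"
  shows "\<not> agree_on (Suc m) (H(m := C)) x"
  using assms unfolding agree_on_def
  by (metis fun_upd_same fun_upd_other lessI zero_less_Suc less_not_refl)

lemma r_wise_1_agreeing_iff:
  assumes "finite X"
  shows "r_wise_t_agreeing X F r 1 \<longleftrightarrow>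
           (\<forall>G. (\<forall>i<r. G i \<in> F) \<longrightarrow> (\<exists>x\<in>X. agree_on r G x))"
  using assms unfolding r_wise_t_agreeing_def by (auto simp: Suc_le_eq card_gt_0_iff)

lemma non_trivial_image_Diff_singleton:
  assumes "non_trivial X F"
  shows "non_trivial (X - {j}) ((\<lambda>A. A - {j}) ` F)"
proof -
  have "F \<noteq> {}"
    using assms unfolding non_trivial_def by auto
  then have "\<Inter> ((\<lambda>A. A - {j}) ` F) = \<Inter> F - {j}"
    by auto
  moreover have "\<Union> ((\<lambda>A. A - {j}) ` F) = \<Union> F - {j}"
    by auto
  ultimately show ?thesis
    using assms unfolding non_trivial_def by auto
qed

lemma r_wise_t_agreeing_image_Diff_singleton:
  assumes "r_wise_t_agreeing X F r t"
  shows "r_wise_t_agreeing (X - {j}) ((\<lambda>A. A - {j}) ` F) r (t - 1)"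
  unfolding r_wise_t_agreeing_def
proof (intro allI impI)
  fix G
  assume "\<forall>i<r. G i \<in> (\<lambda>A. A - {j}) ` F"
  then obtain H where H: "\<forall>i<r. H i \<in> F \<and> G i = H i - {j}"
    by (rule obtain_preimage_tuple)
  let ?S = "{x \<in> X. agree_on r H x}"
  have "t \<le> card ?S"
    using assms H unfolding r_wise_t_agreeing_def by blast
  also have "card ?S - 1 \<le> card (?S - {j})"
    using diff_card_le_card_Diff[of "{j}" ?S] by simp
  also have "?S - {j} = {x \<in> X - {j}. agree_on r G x}"
    using H agree_on_Diff_singleton[of r G H j] by blast
  finally show "t - 1 \<le> card {x \<in> X - {j}. agree_on r G x}"
    by simp
qed

lemma r_wise_1_agreeing_image_Diff_singleton:
  assumes "finite X" and "j \<in> X" and "0 < m"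
    and "non_trivial X F" and "r_wise_t_agreeing X F (Suc m) 1"
  shows "r_wise_t_agreeing (X - {j}) ((\<lambda>A. A - {j}) ` F) m 1"
  unfolding r_wise_1_agreeing_iff[OF finite_Diff[OF assms(1)]]
proof (intro allI impI)
  fix G
  assume "\<forall>i<m. G i \<in> (\<lambda>A. A - {j}) ` F"
  then obtain H where H: "\<forall>i<m. H i \<in> F \<and> G i = H i - {j}"
    by (rule obtain_preimage_tuple)
  have agrees_off_j: "\<exists>x\<in>X - {j}. agree_on m G x"
    if "C \<in> F" and "\<not> agree_on (Suc m) (H(m := C)) j" for C
  proof -
    have "\<forall>i<Suc m. (H(m := C)) i \<in> F"
      using H \<open>C \<in> F\<close> by (simp add: less_Suc_eq)
    then obtain x where "x \<in> X" and x: "agree_on (Suc m) (H(m := C)) x"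
      using assms(5) unfolding r_wise_1_agreeing_iff[OF assms(1)] by blast
    moreover have "x \<noteq> j"
      using x that(2) by blast
    moreover have "agree_on m G x"
      using H agree_on_Diff_singleton[OF _ \<open>x \<noteq> j\<close>, of m G H]
        agree_on_fun_upd_SucD[OF x] by blast
    ultimately show ?thesis
      by blast
  qed
  obtain A where "A \<in> F" "j \<notin> A"
    using assms(4) unfolding non_trivial_def by blast
  obtain B where "B \<in> F" "j \<in> B"
    using assms(2,4) unfolding non_trivial_def by blast
  show "\<exists>x\<in>X - {j}. agree_on m G x"
  proof (cases "j \<in> H 0")
    case True
    then show ?thesis
      using agrees_off_j[OF \<open>A \<in> F\<close>] not_agree_on_fun_upd_Suc[OF assms(3), of j H A]
        \<open>j \<notin> A\<close> by blast
  next
    case False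
    then show ?thesis
      using agrees_off_j[OF \<open>B \<in> F\<close>] not_agree_on_fun_upd_Suc[OF assms(3), of j H B]
        \<open>j \<in> B\<close> by blast
  qed
qed

theorem lemma2:
  fixes n r t j :: nat and F :: "nat set set"
  assumes "r \<ge> 2" and "t \<ge> 1"
    and "F \<subseteq> Pow {1..n}"
    and "non_trivial {1..n} F"
    and "r_wise_t_agreeing {1..n} F r t"
    and "j \<in> {1..n}"
  shows "(t \<ge> 2 \<longrightarrow>
            non_trivial ({1..n} - {j}) ((\<lambda>A. A - {j}) ` F) \<and>
            r_wise_t_agreeing ({1..n} - {j}) ((\<lambda>A. A - {j}) ` F) r (t - 1))
       \<and> (t = 1 \<longrightarrow>
            non_trivial ({1..n} - {j}) ((\<lambda>A. A - {j}) ` F) \<and>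
            r_wise_t_agreeing ({1..n} - {j}) ((\<lambda>A. A - {j}) ` F) (r - 1) 1)"
proof -
  have "0 < r - 1" and r: "Suc (r - 1) = r"
    using assms(1) by auto
  have "r_wise_t_agreeing ({1..n} - {j}) ((\<lambda>A. A - {j}) ` F) (r - 1) 1" if "t = 1"
    using r_wise_1_agreeing_image_Diff_singleton[OF _ assms(6) \<open>0 < r - 1\<close> assms(4)]
      assms(5) that r by simp
  then show ?thesis
    using non_trivial_image_Diff_singleton[OF assms(4)]
      r_wise_t_agreeing_image_Diff_singleton[OF assms(5)] by simp
qed

end
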